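(* Let $(X,\mathcal B,\mu)$ be a probability space and $G$ an lcsc Abelian group with a translation-invariant metric $d$. Let $\varphi_n,\psi_n\colon X\to G$ be measurable maps taking values in a compact set $C\subset G$, with each $\psi_n$ taking values in a fixed finite set $F\subset C$. Assume that, weakly, $(\varphi_n)_*\mu\to\nu$, $(\psi_n)_*\mu\to\kappa$ and $(\varphi_n+\psi_n)_*\mu\to\rho$. Then for each $h_0\in\operatorname{supp}\kappa$ there exists $g_0\in\operatorname{supp}\nu$ with $h_0+g_0\in\operatorname{supp}\rho$; and for each $g_0\in\operatorname{supp}\nu$ there exists $h_0\in\operatorname{supp}\kappa$ with $h_0+g_0\in\operatorname{supp}\rho$. *)

theory Defs
  imports "HOL-Probability.Probability"
begin

definition weak_conv_seq :: "(nat \<Rightarrow> 'a::topological_space measure) \<Rightarrow> 'a measure \<Rightarrow> bool" where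
  "weak_conv_seq \<mu>s \<mu> \<longleftrightarrow>
     (\<forall>f :: 'a \<Rightarrow> real. continuous_on UNIV f \<and> bounded (range f) \<longrightarrow>
        (\<lambda>n. integral\<^sup>L (\<mu>s n) f) \<longlonglongrightarrow> integral\<^sup>L \<mu> f)"

definition measure_supp :: "'a::topological_space measure \<Rightarrow> 'a set" where
  "measure_supp \<nu> = {x. \<forall>U. open U \<and> x \<in> U \<longrightarrow> emeasure \<nu> U > 0}"

end

theory Submission imports Defs begin

text \<open>For weak limits of distributions, a point lies in the support of the limit exactly when the
  probability that the random variables come close to it does not tend to zero; this follows by
  testing weak convergence against a continuous bump at the point. For \<open>h\<^sub>0\<close> in the support of
  \<open>\<kappa>\<close>, the events \<open>\<psi>\<^sub>n = h\<^sub>0\<close> (which is isolated in \<open>F\<close>) do not have vanishing probability; covering the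
  compact \<open>C\<close> by finitely many small balls, some ball around a point \<open>g\<^sub>0\<close> keeps non-vanishing
  probability jointly with \<open>\<psi>\<^sub>n = h\<^sub>0\<close> at every scale. Such a joint concentration forces
  \<open>g\<^sub>0 \<in> supp \<nu>\<close>, \<open>h\<^sub>0 \<in> supp \<kappa>\<close> and, by translation invariance, \<open>h\<^sub>0 + g\<^sub>0 \<in> supp \<rho>\<close>. The other
  direction is symmetric, with the finite set \<open>F\<close> in place of the compact \<open>C\<close>.\<close>

definition bump :: "'a::metric_space \<Rightarrow> real \<Rightarrow> 'a \<Rightarrow> real" where
  "bump x r y = min 1 (max 0 (2 - (2 / r) * dist y x))"

lemma continuous_on_bump: "continuous_on UNIV (bump x r)"
  unfolding bump_def by (intro continuous_intros)

lemma bump_nonneg: "0 \<le> bump x r y" and bump_le_1: "bump x r y \<le> 1"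
  unfolding bump_def by auto

lemma bounded_range_bump: "bounded (range (bump x r))"
  unfolding bounded_iff using bump_nonneg bump_le_1 by (metis abs_of_nonneg rangeE real_norm_def)

lemma bump_between_indicators:
  assumes "r > 0"
  shows "indicator (ball x (r/2)) y \<le> bump x r y" "bump x r y \<le> indicator (ball x r) y"
  using assms bump_nonneg[of x r y] bump_le_1[of x r y]
  by (auto simp: bump_def indicator_def dist_commute field_simps)

lemma integral_bump_bounds:
  assumes "prob_space N" "sets N = sets borel" "r > 0"
  shows "measure N (ball x (r/2)) \<le> integral\<^sup>L N (bump x r)"
    and "integral\<^sup>L N (bump x r) \<le> measure N (ball x r)"
proof -
  interpret prob_space N by fact
  have space: "space N = UNIV" using sets_eq_imp_space_eq[OF assms(2)] by simp
  have int_bump: "integrable N (bump x r)"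
  proof (rule integrable_const_bound[where B=1])
    show "AE y in N. norm (bump x r y) \<le> 1" by (simp add: bump_nonneg bump_le_1)
    show "bump x r \<in> borel_measurable N"
      using borel_measurable_continuous_onI[OF continuous_on_bump]
      by (simp add: measurable_cong_sets[OF assms(2) refl])
  qed
  have int_ball: "integrable N (indicator (ball x s) :: _ \<Rightarrow> real)" for s
    using assms(2) by (simp add: less_top[symmetric])
  have "integral\<^sup>L N (indicator (ball x (r/2))) \<le> integral\<^sup>L N (bump x r)"
    by (rule integral_mono[OF int_ball int_bump]) (use bump_between_indicators assms(3) in blast)
  then show "measure N (ball x (r/2)) \<le> integral\<^sup>L N (bump x r)"
    by (simp add: space)
  have "integral\<^sup>L N (bump x r) \<le> integral\<^sup>L N (indicator (ball x r))"
    by (rule integral_mono[OF int_bump int_ball]) (use bump_between_indicators assms(3) in blast)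
  then show "integral\<^sup>L N (bump x r) \<le> measure N (ball x r)"
    by (simp add: space)
qed

lemma integral_bump_nonneg: "0 \<le> integral\<^sup>L N (bump x r)"
  by (rule integral_nonneg_AE) (simp add: bump_nonneg)

lemma integral_bump_distr_bounds:
  assumes "prob_space M" "X \<in> borel_measurable M" "r > 0"
  shows "measure M (X -` ball x (r/2) \<inter> space M) \<le> integral\<^sup>L (distr M borel X) (bump x r)"
    and "integral\<^sup>L (distr M borel X) (bump x r) \<le> measure M (X -` ball x r \<inter> space M)"
  using integral_bump_bounds[OF prob_space.prob_space_distr[OF assms(1,2)] _ assms(3), of x] assms(2)
  by (simp_all add: measure_distr)

lemma measure_supp_metric_iff:
  fixes \<mu> :: "'a::metric_space measure"
  assumes "finite_measure \<mu>" "sets \<mu> = sets borel"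
  shows "x \<in> measure_supp \<mu> \<longleftrightarrow> (\<forall>e>0. measure \<mu> (ball x e) > 0)"
proof (unfold measure_supp_def finite_measure.emeasure_eq_measure[OF assms(1)], safe)
  fix e :: real assume "0 < e" "\<forall>U. open U \<and> x \<in> U \<longrightarrow> 0 < ennreal (measure \<mu> U)"
  then show "0 < measure \<mu> (ball x e)" by auto
next
  fix U assume balls: "\<forall>e>0. 0 < measure \<mu> (ball x e)" and "open U" "x \<in> U"
  then obtain e where "e > 0" "ball x e \<subseteq> U" using open_contains_ball by blast
  then have "measure \<mu> (ball x e) \<le> measure \<mu> U"
    using \<open>open U\<close> assms by (intro finite_measure.finite_measure_mono) auto
  with balls \<open>e > 0\<close> show "0 < ennreal (measure \<mu> U)" by fastforce
qed

lemma measure_supp_weak_limit_iff: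
  fixes X :: "nat \<Rightarrow> 'x \<Rightarrow> 'a::metric_space"
  assumes "prob_space M" "\<And>n. X n \<in> borel_measurable M"
    and "weak_conv_seq (\<lambda>n. distr M borel (X n)) \<mu>"
    and "prob_space \<mu>" "sets \<mu> = sets borel"
  shows "x \<in> measure_supp \<mu> \<longleftrightarrow>
           (\<forall>e>0. \<not> (\<lambda>n. measure M (X n -` ball x e \<inter> space M)) \<longlonglongrightarrow> 0)"
proof -
  have lim: "(\<lambda>n. integral\<^sup>L (distr M borel (X n)) (bump x r)) \<longlonglongrightarrow> integral\<^sup>L \<mu> (bump x r)" for r
    using assms(3) continuous_on_bump bounded_range_bump unfolding weak_conv_seq_def by blast
  note bounds_n = integral_bump_distr_bounds[OF assms(1,2), where x=x]
  note bounds = integral_bump_bounds[OF assms(4,5), where x=x]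
  have supp: "x \<in> measure_supp \<mu> \<longleftrightarrow> (\<forall>e>0. measure \<mu> (ball x e) > 0)"
    using measure_supp_metric_iff[OF prob_space.finite_measure assms(5)] assms(4) by blast
  show ?thesis
  proof (unfold supp, intro iffI allI impI notI)
    fix e :: real assume "e > 0" and balls: "\<forall>e>0. measure \<mu> (ball x e) > 0"
    assume vanishing: "(\<lambda>n. measure M (X n -` ball x e \<inter> space M)) \<longlonglongrightarrow> 0"
    have "(\<lambda>n. integral\<^sup>L (distr M borel (X n)) (bump x e)) \<longlonglongrightarrow> 0"
      by (intro tendsto_sandwich[OF _ _ tendsto_const vanishing])
        (auto intro!: always_eventually bounds_n(2) \<open>e > 0\<close> integral_bump_nonneg)
    then have "integral\<^sup>L \<mu> (bump x e) = 0" using lim LIMSEQ_unique by blast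
    with bounds(1)[OF \<open>e > 0\<close>] balls \<open>e > 0\<close> show False
      by (metis half_gt_zero linorder_not_less)
  next
    fix e :: real assume "e > 0"
      and nonvanishing: "\<forall>e>0. \<not> (\<lambda>n. measure M (X n -` ball x e \<inter> space M)) \<longlonglongrightarrow> 0"
    show "measure \<mu> (ball x e) > 0"
    proof (rule ccontr)
      assume "\<not> measure \<mu> (ball x e) > 0"
      then have "integral\<^sup>L \<mu> (bump x e) = 0"
        using bounds(2)[OF \<open>e > 0\<close>] integral_bump_nonneg[of \<mu> x e] measure_nonneg[of \<mu> "ball x e"]
        by linarith
      then have lim_zero: "(\<lambda>n. integral\<^sup>L (distr M borel (X n)) (bump x e)) \<longlonglongrightarrow> 0"
        using lim[of e] by simp
      have "(\<lambda>n. measure M (X n -` ball x (e/2) \<inter> space M)) \<longlonglongrightarrow> 0"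
        by (intro tendsto_sandwich[OF _ _ tendsto_const lim_zero])
          (auto intro!: always_eventually bounds_n(1)[OF \<open>e > 0\<close>])
      with nonvanishing \<open>e > 0\<close> show False by (meson half_gt_zero)
    qed
  qed
qed

lemma tendsto_measure_zero_if_covered:
  assumes "finite_measure M" "finite I"
    and "\<And>i n. i \<in> I \<Longrightarrow> B i n \<in> sets M"
    and "\<And>n. A n \<subseteq> (\<Union>i\<in>I. B i n)"
    and "\<And>i. i \<in> I \<Longrightarrow> (\<lambda>n. measure M (B i n)) \<longlonglongrightarrow> 0"
  shows "(\<lambda>n. measure M (A n)) \<longlonglongrightarrow> 0"
proof -
  interpret finite_measure M by fact
  have le_sum: "measure M (A n) \<le> (\<Sum>i\<in>I. measure M (B i n))" for n
  proof -
    have "measure M (A n) \<le> measure M (\<Union>i\<in>I. B i n)"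
      by (rule finite_measure_mono) (use assms in auto)
    also have "\<dots> \<le> (\<Sum>i\<in>I. measure M (B i n))"
      by (rule finite_measure_subadditive_finite) (use assms in auto)
    finally show ?thesis .
  qed
  have lim_sum: "(\<lambda>n. \<Sum>i\<in>I. measure M (B i n)) \<longlonglongrightarrow> 0"
    by (rule tendsto_null_sum) (rule assms(5))
  show ?thesis
    by (rule tendsto_sandwich[OF _ _ tendsto_const lim_sum]) (simp_all add: le_sum)
qed

lemma tendsto_measure_zero_subset:
  assumes "finite_measure M" "\<And>n. A n \<subseteq> B n" "\<And>n. B n \<in> sets M"
    and "(\<lambda>n. measure M (B n)) \<longlonglongrightarrow> 0"
  shows "(\<lambda>n. measure M (A n)) \<longlonglongrightarrow> 0"
  by (rule tendsto_measure_zero_if_covered[OF assms(1), of "{()}" "\<lambda>_. B"]) (use assms(2-4) in auto)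

lemma not_vanishing_concentrates_in_compact:
  fixes X :: "nat \<Rightarrow> 'x \<Rightarrow> 'a::metric_space"
  assumes "finite_measure M" "compact K"
    and "\<And>n. A n \<in> sets M" "\<And>n. X n \<in> borel_measurable M"
    and "\<And>n \<omega>. \<omega> \<in> A n \<Longrightarrow> X n \<omega> \<in> K"
    and "\<not> (\<lambda>n. measure M (A n)) \<longlonglongrightarrow> 0"
  shows "\<exists>z\<in>K. \<forall>e>0. \<not> (\<lambda>n. measure M {\<omega> \<in> A n. X n \<omega> \<in> ball z e}) \<longlonglongrightarrow> 0"
proof (rule ccontr)
  assume "\<not> ?thesis"
  then have "\<forall>z\<in>K. \<exists>e. e > 0 \<and> (\<lambda>n. measure M {\<omega> \<in> A n. X n \<omega> \<in> ball z e}) \<longlonglongrightarrow> 0"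
    by blast
  from bchoice[OF this] obtain \<epsilon>
    where "\<forall>z\<in>K. \<epsilon> z > 0 \<and> (\<lambda>n. measure M {\<omega> \<in> A n. X n \<omega> \<in> ball z (\<epsilon> z)}) \<longlonglongrightarrow> 0" ..
  then have \<epsilon>: "\<And>z. z \<in> K \<Longrightarrow> \<epsilon> z > 0"
    "\<And>z. z \<in> K \<Longrightarrow> (\<lambda>n. measure M {\<omega> \<in> A n. X n \<omega> \<in> ball z (\<epsilon> z)}) \<longlonglongrightarrow> 0"
    by auto
  obtain D where D: "D \<subseteq> K" "finite D" "K \<subseteq> (\<Union>z\<in>D. ball z (\<epsilon> z))"
    using compactE_image[OF assms(2), of K "\<lambda>z. ball z (\<epsilon> z)"] \<epsilon>(1) by force
  have "{\<omega> \<in> A n. X n \<omega> \<in> ball z r} = A n \<inter> (X n -` ball z r \<inter> space M)" for n z r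
    using sets.sets_into_space[OF assms(3)] by blast
  then have events: "{\<omega> \<in> A n. X n \<omega> \<in> ball z r} \<in> sets M" for n z r
    using assms(3,4) by (simp add: sets.Int measurable_sets)
  have "(\<lambda>n. measure M (A n)) \<longlonglongrightarrow> 0"
  proof (rule tendsto_measure_zero_if_covered[OF assms(1) \<open>finite D\<close> events])
    show "A n \<subseteq> (\<Union>z\<in>D. {\<omega> \<in> A n. X n \<omega> \<in> ball z (\<epsilon> z)})" for n
      using assms(5) D(3) by blast
  qed (use D(1) \<epsilon>(2) in blast)
  with assms(6) show False by blast
qed

lemma not_vanishing_concentrates_at_finite_value:
  fixes Y :: "nat \<Rightarrow> 'x \<Rightarrow> 'a::metric_space" and B :: "real \<Rightarrow> nat \<Rightarrow> 'x set"
  assumes "finite_measure M" "finite F"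
    and "\<And>e n. B e n \<in> sets M" "\<And>e e' n. e \<le> e' \<Longrightarrow> B e n \<subseteq> B e' n"
    and "\<And>n. Y n \<in> borel_measurable M" "\<And>n \<omega>. \<omega> \<in> space M \<Longrightarrow> Y n \<omega> \<in> F"
    and "\<And>e. e > 0 \<Longrightarrow> \<not> (\<lambda>n. measure M (B e n)) \<longlonglongrightarrow> 0"
  shows "\<exists>h\<in>F. \<forall>e>0. \<not> (\<lambda>n. measure M {\<omega> \<in> B e n. Y n \<omega> = h}) \<longlonglongrightarrow> 0"
proof (rule ccontr)
  assume "\<not> ?thesis"
  then have "\<forall>h\<in>F. \<exists>e. e > 0 \<and> (\<lambda>n. measure M {\<omega> \<in> B e n. Y n \<omega> = h}) \<longlonglongrightarrow> 0"
    by blast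
  from bchoice[OF this] obtain \<epsilon>
    where "\<forall>h\<in>F. \<epsilon> h > 0 \<and> (\<lambda>n. measure M {\<omega> \<in> B (\<epsilon> h) n. Y n \<omega> = h}) \<longlonglongrightarrow> 0" ..
  then have \<epsilon>: "\<And>h. h \<in> F \<Longrightarrow> \<epsilon> h > 0"
    "\<And>h. h \<in> F \<Longrightarrow> (\<lambda>n. measure M {\<omega> \<in> B (\<epsilon> h) n. Y n \<omega> = h}) \<longlonglongrightarrow> 0"
    by auto
  define e where "e = Min (insert 1 (\<epsilon> ` F))"
  have "e > 0" and e_le: "\<And>h. h \<in> F \<Longrightarrow> e \<le> \<epsilon> h"
    unfolding e_def using assms(2) \<epsilon>(1) by auto
  have "{\<omega> \<in> B r n. Y n \<omega> = h} = B r n \<inter> (Y n -` {h} \<inter> space M)" for n r h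
    using sets.sets_into_space[OF assms(3)] by blast
  then have events: "{\<omega> \<in> B r n. Y n \<omega> = h} \<in> sets M" for n r h
    using assms(3,5) by (simp add: sets.Int measurable_sets)
  have "(\<lambda>n. measure M (B e n)) \<longlonglongrightarrow> 0"
  proof (rule tendsto_measure_zero_if_covered[OF assms(1,2) events])
    fix n
    show "B e n \<subseteq> (\<Union>h\<in>F. {\<omega> \<in> B (\<epsilon> h) n. Y n \<omega> = h})"
    proof
      fix \<omega> assume \<omega>: "\<omega> \<in> B e n"
      then have "Y n \<omega> \<in> F" using assms(6) sets.sets_into_space[OF assms(3)] by blast
      moreover have "\<omega> \<in> B (\<epsilon> (Y n \<omega>)) n" using \<omega> assms(4)[OF e_le[OF \<open>Y n \<omega> \<in> F\<close>]] by blast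
      ultimately show "\<omega> \<in> (\<Union>h\<in>F. {\<omega> \<in> B (\<epsilon> h) n. Y n \<omega> = h})" by blast
    qed
  qed (rule \<epsilon>(2))
  with assms(7) \<open>e > 0\<close> show False by blast
qed

text \<open>The first coordinate is matched exactly rather than up to \<open>e\<close>: it will range over a finite set.\<close>

definition joint_limit_point ::
    "'x measure \<Rightarrow> (nat \<Rightarrow> 'x \<Rightarrow> 'b) \<Rightarrow> (nat \<Rightarrow> 'x \<Rightarrow> 'a::metric_space) \<Rightarrow> 'b \<Rightarrow> 'a \<Rightarrow> bool" where
  "joint_limit_point M Y X h g \<longleftrightarrow>
     (\<forall>e>0. \<not> (\<lambda>n. measure M {\<omega> \<in> space M. Y n \<omega> = h \<and> X n \<omega> \<in> ball g e}) \<longlonglongrightarrow> 0)"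

lemma supp_if_joint_limit_point:
  fixes Z :: "nat \<Rightarrow> 'x \<Rightarrow> 'c::metric_space"
  assumes "prob_space M" "\<And>n. Z n \<in> borel_measurable M"
    and "weak_conv_seq (\<lambda>n. distr M borel (Z n)) \<mu>"
    and "prob_space \<mu>" "sets \<mu> = sets borel"
    and "\<And>n \<omega>. \<omega> \<in> space M \<Longrightarrow> Y n \<omega> = h \<Longrightarrow> dist z (Z n \<omega>) \<le> dist g (X n \<omega>)"
    and "joint_limit_point M Y X h g"
  shows "z \<in> measure_supp \<mu>"
  unfolding measure_supp_weak_limit_iff[OF assms(1-5)]
proof (intro allI impI notI)
  fix e :: real
  assume "e > 0" and vanishing: "(\<lambda>n. measure M (Z n -` ball z e \<inter> space M)) \<longlonglongrightarrow> 0"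
  have "{\<omega> \<in> space M. Y n \<omega> = h \<and> X n \<omega> \<in> ball g e} \<subseteq> Z n -` ball z e \<inter> space M" for n
    using assms(6) by fastforce
  then have "(\<lambda>n. measure M {\<omega> \<in> space M. Y n \<omega> = h \<and> X n \<omega> \<in> ball g e}) \<longlonglongrightarrow> 0"
    by (rule tendsto_measure_zero_subset[OF prob_space.finite_measure[OF assms(1)] _ _ vanishing])
      (use assms(2) in \<open>auto intro: measurable_sets\<close>)
  with assms(7) \<open>e > 0\<close> show False
    unfolding joint_limit_point_def by blast
qed

lemma joint_limit_point_at_supp_value:
  fixes X :: "nat \<Rightarrow> 'x \<Rightarrow> 'a::metric_space" and Y :: "nat \<Rightarrow> 'x \<Rightarrow> 'b::metric_space"
  assumes "prob_space M" "compact C" "finite F"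
    and "\<And>n. X n \<in> borel_measurable M" "\<And>n. Y n \<in> borel_measurable M"
    and "\<And>n \<omega>. \<omega> \<in> space M \<Longrightarrow> X n \<omega> \<in> C" "\<And>n \<omega>. \<omega> \<in> space M \<Longrightarrow> Y n \<omega> \<in> F"
    and "weak_conv_seq (\<lambda>n. distr M borel (Y n)) \<kappa>" "prob_space \<kappa>" "sets \<kappa> = sets borel"
    and "h \<in> measure_supp \<kappa>"
  shows "\<exists>g. joint_limit_point M Y X h g"
proof -
  obtain \<delta> where "\<delta> > 0" and \<delta>: "\<And>y. y \<in> F \<Longrightarrow> y \<noteq> h \<Longrightarrow> \<delta> \<le> dist h y"
    using finite_set_avoid[OF assms(3)] by blast
  have "Y n -` ball h \<delta> \<inter> space M = {\<omega> \<in> space M. Y n \<omega> = h}" for n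
    using assms(7) \<delta> \<open>\<delta> > 0\<close> by fastforce
  then have not_vanishing: "\<not> (\<lambda>n. measure M {\<omega> \<in> space M. Y n \<omega> = h}) \<longlonglongrightarrow> 0"
    using assms(11) \<open>\<delta> > 0\<close> measure_supp_weak_limit_iff[OF assms(1,5,8-10)] by auto
  have events: "{\<omega> \<in> space M. Y n \<omega> = h} \<in> sets M" for n
    using measurable_sets[OF assms(5), of "{h}" n] by (simp add: vimage_def Int_def conj_commute)
  have in_C: "X n \<omega> \<in> C" if "\<omega> \<in> {\<omega> \<in> space M. Y n \<omega> = h}" for n \<omega>
    using assms(6) that by blast
  obtain g
    where g: "\<forall>e>0. \<not> (\<lambda>n. measure M {\<omega> \<in> {\<omega> \<in> space M. Y n \<omega> = h}. X n \<omega> \<in> ball g e}) \<longlonglongrightarrow> 0"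
    using not_vanishing_concentrates_in_compact[where A="\<lambda>n. {\<omega> \<in> space M. Y n \<omega> = h}" and X=X,
        OF prob_space.finite_measure[OF assms(1)] assms(2) events assms(4) in_C not_vanishing]
    by blast
  have joint_event: "{\<omega> \<in> {\<omega> \<in> space M. Y n \<omega> = h}. X n \<omega> \<in> ball g e}
      = {\<omega> \<in> space M. Y n \<omega> = h \<and> X n \<omega> \<in> ball g e}" for n e
    by blast
  show ?thesis
    unfolding joint_limit_point_def using g[unfolded joint_event] by blast
qed

lemma joint_limit_point_at_supp_point:
  fixes X :: "nat \<Rightarrow> 'x \<Rightarrow> 'a::metric_space" and Y :: "nat \<Rightarrow> 'x \<Rightarrow> 'b::metric_space"
  assumes "prob_space M" "finite F"
    and "\<And>n. X n \<in> borel_measurable M" "\<And>n. Y n \<in> borel_measurable M"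
    and "\<And>n \<omega>. \<omega> \<in> space M \<Longrightarrow> Y n \<omega> \<in> F"
    and "weak_conv_seq (\<lambda>n. distr M borel (X n)) \<nu>" "prob_space \<nu>" "sets \<nu> = sets borel"
    and "g \<in> measure_supp \<nu>"
  shows "\<exists>h. joint_limit_point M Y X h g"
proof -
  let ?B = "\<lambda>e n. X n -` ball g e \<inter> space M"
  have "\<exists>h\<in>F. \<forall>e>0. \<not> (\<lambda>n. measure M {\<omega> \<in> ?B e n. Y n \<omega> = h}) \<longlonglongrightarrow> 0"
  proof (rule not_vanishing_concentrates_at_finite_value[where B = ?B,
        OF prob_space.finite_measure[OF assms(1)] assms(2) _ _ assms(4,5)])
    show "?B e n \<in> sets M" for e n
      using assms(3) by (rule measurable_sets) simp
    show "?B e n \<subseteq> ?B e' n" if "e \<le> e'" for e e' n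
      using that by auto
    show "\<not> (\<lambda>n. measure M (?B e n)) \<longlonglongrightarrow> 0" if "e > 0" for e
      using that assms(9) measure_supp_weak_limit_iff[OF assms(1,3,6-8)] by blast
  qed
  moreover have joint_event: "{\<omega> \<in> ?B e n. Y n \<omega> = h}
      = {\<omega> \<in> space M. Y n \<omega> = h \<and> X n \<omega> \<in> ball g e}" for e n h
    by blast
  ultimately show ?thesis
    unfolding joint_limit_point_def joint_event by blast
qed

theorem lemma2p4:
  fixes M :: "'x measure"
    and \<phi> \<psi> :: "nat \<Rightarrow> 'x \<Rightarrow> 'g::{metric_space, second_countable_topology, topological_group_add, ab_group_add}"
    and C F :: "'g set"
    and \<nu> \<kappa> \<rho> :: "'g measure"
  assumes "prob_space M"
    and "locally_compact_space (euclidean :: 'g topology)"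
    and transl_inv: "\<And>x y z :: 'g. dist (x + z) (y + z) = dist x y"
    and "compact C" and "finite F" and "F \<subseteq> C"
    and "\<And>n. \<phi> n \<in> borel_measurable M" and "\<And>n. \<psi> n \<in> borel_measurable M"
    and "\<And>n x. x \<in> space M \<Longrightarrow> \<phi> n x \<in> C"
    and "\<And>n x. x \<in> space M \<Longrightarrow> \<psi> n x \<in> F"
    and "prob_space \<nu>" and "sets \<nu> = sets borel"
    and "prob_space \<kappa>" and "sets \<kappa> = sets borel"
    and "prob_space \<rho>" and "sets \<rho> = sets borel"
    and "weak_conv_seq (\<lambda>n. distr M borel (\<phi> n)) \<nu>"
    and "weak_conv_seq (\<lambda>n. distr M borel (\<psi> n)) \<kappa>"
    and "weak_conv_seq (\<lambda>n. distr M borel (\<lambda>x. \<phi> n x + \<psi> n x)) \<rho>"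
  shows "(\<forall>h0 \<in> measure_supp \<kappa>. \<exists>g0 \<in> measure_supp \<nu>. h0 + g0 \<in> measure_supp \<rho>)
       \<and> (\<forall>g0 \<in> measure_supp \<nu>. \<exists>h0 \<in> measure_supp \<kappa>. h0 + g0 \<in> measure_supp \<rho>)"
proof -
  have sum_measurable: "(\<lambda>x. \<phi> n x + \<psi> n x) \<in> borel_measurable M" for n
    using assms(7,8) by (rule borel_measurable_add)
  have supports: "g \<in> measure_supp \<nu> \<and> h \<in> measure_supp \<kappa> \<and> h + g \<in> measure_supp \<rho>"
    if "joint_limit_point M \<psi> \<phi> h g" for h g
  proof (intro conjI)
    show "g \<in> measure_supp \<nu>"
      by (rule supp_if_joint_limit_point[OF assms(1,7,17,11,12) _ that]) simp
    show "h \<in> measure_supp \<kappa>"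
      by (rule supp_if_joint_limit_point[OF assms(1,8,18,13,14) _ that]) simp
    show "h + g \<in> measure_supp \<rho>"
      by (rule supp_if_joint_limit_point[OF assms(1) sum_measurable assms(19,15,16) _ that])
        (metis add.commute order_refl transl_inv)
  qed
  show ?thesis
    using supports
      joint_limit_point_at_supp_value[where X=\<phi> and Y=\<psi>, OF assms(1,4,5,7-10,18,13,14)]
      joint_limit_point_at_supp_point[where X=\<phi> and Y=\<psi>, OF assms(1,5,7,8,10,17,11,12)]
    by blast
qed

end
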